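(* For each of the three pairs of families (Demazure atoms, monomial slide polynomials), (Demazure atoms, fundamental slide polynomials), (fundamental particles, monomial slide polynomials), neither family expands positively in the other; that is, in each pair, some element of the first family is not a nonnegative linear combination of elements of the second, and some element of the second is not a nonnegative linear combination of elements of the first.
   Context: Weak composition of length $n$: sequence of $n$ nonnegative integers; $\mathrm{flat}(a)$ deletes zero parts; $b\ge a$ means $b_1+\cdots+b_i\ge a_1+\cdots+a_i$ for all $i$. $\mathfrak{M}_a=\sum x^b$ over $b\ge a$ (length $n$) with $\mathrm{flat}(b)=\mathrm{flat}(a)$; $\mathfrak{F}_a=\sum x^b$ over $b\ge a$ with $\mathrm{flat}(b)$ refining $\mathrm{flat}(a)$. Fundamental particle: a local move replaces consecutive entries $(0,k)$ at positions $p,p+1$ by $(i,j)$, $i+j=k$, $i,j\ge0$; fixed slides of $a$ are obtained by sequences of such moves with $j>0$ required whenever $a_{p+1}\neq0$; $\mathfrak{L}_a=\sum x^b$ over the set of fixed slides $b$. Demazure atom: in $D(a)$ ($a_i$ left-justified boxes in row $i$, row 1 lowest), triples (rows $r<s$) are Type A: $\gamma=(r,c),\alpha=(r,c+1),\beta=(s,c+1)$ with $a_r\ge a_s$, or Type B: $\gamma=(s,c),\alpha=(s,c+1),\beta=(r,c)$ with $a_s>a_r$; inversion triple: $\beta>\gamma\ge\alpha$ or $\gamma\ge\alpha>\beta$; $\mathcal{A}_a=\sum_S\prod_i x_i^{\#\{\text{entries } i\}}$ over fillings $S$ of $D(a)$ with positive integers, rows weakly decreasing left to right, distinct column entries, all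 triples inversion triples, and first-column entry of each nonempty row $i$ equal to $i$. Each family (for fixed length $n$) is a basis of $\mathbb{Z}[x_1,\ldots,x_n]$. *)

theory Defs
  imports Main
begin

(* Weak compositions are lists of naturals.  A polynomial in Z[x_1..x_n] is represented
   by its coefficient function: exponent vector (nat list of length n) => int coefficient. *)

definition flat :: "nat list \<Rightarrow> nat list" where
  "flat a = filter (\<lambda>x. x \<noteq> 0) a"

definition dom_ge :: "nat list \<Rightarrow> nat list \<Rightarrow> bool" where
  "dom_ge b a \<longleftrightarrow> length b = length a \<and>
     (\<forall>i\<le>length a. sum_list (take i b) \<ge> sum_list (take i a))"

definition refines :: "nat list \<Rightarrow> nat list \<Rightarrow> bool" where
  "refines c d \<longleftrightarrow> (\<exists>cs. c = concat cs \<and> map sum_list cs = d \<and> (\<forall>x\<in>set cs. x \<noteq> []))"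

definition monoslide :: "nat list \<Rightarrow> nat list \<Rightarrow> int" where
  "monoslide a b = (if dom_ge b a \<and> flat b = flat a then 1 else 0)"

definition fundslide :: "nat list \<Rightarrow> nat list \<Rightarrow> int" where
  "fundslide a b = (if dom_ge b a \<and> refines (flat b) (flat a) then 1 else 0)"

(* fixed slides of a: positions are 0-indexed, p and p+1 consecutive *)
inductive_set fixed_slides :: "nat list \<Rightarrow> nat list set" for a where
  refl: "a \<in> fixed_slides a"
| move: "\<lbrakk> b \<in> fixed_slides a; Suc p < length b; b ! p = 0; b ! Suc p = i + j;
          a ! Suc p \<noteq> 0 \<longrightarrow> j > 0 \<rbrakk>
        \<Longrightarrow> b[p := i, Suc p := j] \<in> fixed_slides a"

definition particle :: "nat list \<Rightarrow> nat list \<Rightarrow> int" where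
  "particle a b = (if b \<in> fixed_slides a then 1 else 0)"

(* Demazure atoms.  Rows r = 1..n (row 1 lowest), columns c = 1..a_r; a_r = a ! (r-1). *)
definition diag :: "nat list \<Rightarrow> (nat \<times> nat) set" where
  "diag a = {(r, c). 1 \<le> r \<and> r \<le> length a \<and> 1 \<le> c \<and> c \<le> a ! (r - 1)}"

definition inv_triple :: "nat \<Rightarrow> nat \<Rightarrow> nat \<Rightarrow> bool" where
  "inv_triple g al be \<longleftrightarrow> (be > g \<and> g \<ge> al) \<or> (g \<ge> al \<and> al > be)"

definition atom_filling :: "nat list \<Rightarrow> (nat \<times> nat \<Rightarrow> nat) \<Rightarrow> bool" where
  "atom_filling a S \<longleftrightarrow>
     (\<forall>x. x \<notin> diag a \<longrightarrow> S x = 0) \<and>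
     (\<forall>x\<in>diag a. S x \<ge> 1) \<and>
     (\<forall>r c. (r, c) \<in> diag a \<and> (r, Suc c) \<in> diag a \<longrightarrow> S (r, c) \<ge> S (r, Suc c)) \<and>
     (\<forall>r s c. (r, c) \<in> diag a \<and> (s, c) \<in> diag a \<and> r \<noteq> s \<longrightarrow> S (r, c) \<noteq> S (s, c)) \<and>
     \<comment> \<open>Type A triples\<close>
     (\<forall>r s c. r < s \<and> a ! (r - 1) \<ge> a ! (s - 1) \<and>
        (r, c) \<in> diag a \<and> (r, Suc c) \<in> diag a \<and> (s, Suc c) \<in> diag a \<longrightarrow>
        inv_triple (S (r, c)) (S (r, Suc c)) (S (s, Suc c))) \<and>
     \<comment> \<open>Type B triples\<close>
     (\<forall>r s c. r < s \<and> a ! (s - 1) > a ! (r - 1) \<and>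
        (s, c) \<in> diag a \<and> (s, Suc c) \<in> diag a \<and> (r, c) \<in> diag a \<longrightarrow>
        inv_triple (S (s, c)) (S (s, Suc c)) (S (r, c))) \<and>
     (\<forall>i. 1 \<le> i \<and> i \<le> length a \<and> a ! (i - 1) \<noteq> 0 \<longrightarrow> S (i, 1) = i)"

definition atom :: "nat list \<Rightarrow> nat list \<Rightarrow> int" where
  "atom a b = (if length b = length a then
      int (card {S. atom_filling a S \<and>
                   (\<forall>i. 1 \<le> i \<and> i \<le> length a \<longrightarrow>
                        card {x \<in> diag a. S x = i} = b ! (i - 1))})
    else 0)"

definition pos_comb :: "nat \<Rightarrow> (nat list \<Rightarrow> nat list \<Rightarrow> int) \<Rightarrow> (nat list \<Rightarrow> int) \<Rightarrow> bool" where
  "pos_comb n P f \<longleftrightarrow> (\<exists>c :: nat list \<Rightarrow> int.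
      finite {a. c a \<noteq> 0} \<and> (\<forall>a. c a \<ge> 0) \<and> (\<forall>a. c a \<noteq> 0 \<longrightarrow> length a = n) \<and>
      (\<forall>b. f b = (\<Sum>a\<in>{a. c a \<noteq> 0}. c a * P a b)))"

definition mutually_nonpositive :: "(nat list \<Rightarrow> nat list \<Rightarrow> int) \<Rightarrow> (nat list \<Rightarrow> nat list \<Rightarrow> int) \<Rightarrow> bool" where
  "mutually_nonpositive X Y \<longleftrightarrow>
     (\<exists>a. \<not> pos_comb (length a) Y (X a)) \<and> (\<exists>a. \<not> pos_comb (length a) X (Y a))"

end

theory Submission
  imports Defs
begin

(* All families have nonnegative coefficients, so in a positive expansion
   f = c_1 P_1 + ... + c_k P_k every monomial of a P_i with c_i > 0 is a monomial of f.
   It therefore suffices to exhibit a monomial of f such that every P containing it also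
   contains a monomial missing from f.  Compositions of length two suffice:
   A_01 = x_2 and L_01 = x_2, whereas M_01 = F_01 = x_1 + x_2;
   M_13 = F_13 = x_1 x_2^3, whereas A_13 also contains x_1^2 x_2^2;
   M_02 = x_2^2 + x_1^2, whereas L_02 = x_2^2 + x_1 x_2. *)

lemma not_pos_comb_by_support:
  fixes P :: "nat list \<Rightarrow> nat list \<Rightarrow> int"
  assumes nonneg: "\<And>a b. P a b \<ge> 0" and fb: "f b \<noteq> 0"
    and escape: "\<And>a. length a = n \<Longrightarrow> P a b \<noteq> 0 \<Longrightarrow> \<exists>b'. P a b' \<noteq> 0 \<and> f b' = 0"
  shows "\<not> pos_comb n P f"
proof
  assume "pos_comb n P f"
  then obtain c where fin: "finite {a. c a \<noteq> 0}" and c_nonneg: "\<forall>a. c a \<ge> 0"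
    and len: "\<forall>a. c a \<noteq> 0 \<longrightarrow> length a = n"
    and f: "\<And>b. f b = (\<Sum>a\<in>{a. c a \<noteq> 0}. c a * P a b)"
    unfolding pos_comb_def by blast
  obtain a where ca: "c a \<noteq> 0" and Pab: "P a b \<noteq> 0"
    using fb f[of b] by (auto elim: sum.not_neutral_contains_not_neutral)
  then obtain b' where Pab': "P a b' \<noteq> 0" and fb': "f b' = 0"
    using escape len by blast
  have "\<forall>x\<in>{a. c a \<noteq> 0}. c x * P x b' = 0"
    using sum_nonneg_eq_0_iff[OF fin, of "\<lambda>x. c x * P x b'"] f[of b'] fb' c_nonneg nonneg
    by simp
  with ca Pab' show False by simp
qed

lemma dom_ge_pair:
  "dom_ge b [x, y] \<longleftrightarrow> (\<exists>u v. b = [u, v] \<and> x \<le> u \<and> x + y \<le> u + v)"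
proof
  assume dom: "dom_ge b [x, y]"
  then obtain u v where b: "b = [u, v]"
    by (auto simp: dom_ge_def numeral_2_eq_2 length_Suc_conv)
  moreover have prefix: "sum_list (take k [x, y]) \<le> sum_list (take k b)" if "k \<le> 2" for k
    using dom that by (simp add: dom_ge_def)
  ultimately show "\<exists>u v. b = [u, v] \<and> x \<le> u \<and> x + y \<le> u + v"
    using prefix[of 1] prefix[of 2] by (simp add: numeral_2_eq_2)
next
  assume "\<exists>u v. b = [u, v] \<and> x \<le> u \<and> x + y \<le> u + v"
  then show "dom_ge b [x, y]" unfolding dom_ge_def by (auto simp: le_Suc_eq numeral_2_eq_2)
qed

lemma sum_list_flat: "sum_list (flat a) = sum_list a"
  by (induction a) (auto simp: flat_def)

lemma refines_refl: "refines c c"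
  unfolding refines_def by (rule exI[of _ "map (\<lambda>x. [x]) c"]) (simp add: map_concat comp_def)

lemma sum_list_concat: "sum_list (concat xss) = sum_list (map sum_list xss)"
  by (induction xss) simp_all

lemma refines_sum_list: "refines c d \<Longrightarrow> sum_list c = sum_list d"
  unfolding refines_def by (auto simp: sum_list_concat)

lemma refines_Cons_le: "refines (x # xs) (e # es) \<Longrightarrow> x \<le> e"
  unfolding refines_def
proof (elim exE conjE)
  fix cs assume "x # xs = concat cs" "map sum_list cs = e # es" "\<forall>c\<in>set cs. c \<noteq> []"
  then obtain c cs' where "cs = (x # c) # cs'" "e = sum_list (x # c)"
    by (cases cs; cases "hd cs") auto
  then show "x \<le> e" by simp
qed

lemma monoslide_le_fundslide: "monoslide a b \<le> fundslide a b"
  by (simp add: monoslide_def fundslide_def refines_refl)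

lemma fundslide_nonzero_dom_ge:
  "fundslide a b \<noteq> 0 \<Longrightarrow> dom_ge b a \<and> sum_list b = sum_list a"
  by (auto simp: fundslide_def sum_list_flat split: if_splits dest!: refines_sum_list)

lemma fundslide_containing_0_1: "fundslide a [0, 1] \<noteq> 0 \<Longrightarrow> a = [0, 1]"
proof -
  assume "fundslide a [0, 1] \<noteq> 0"
  then have dom: "dom_ge [0, 1] a" and sum: "sum_list [0, 1] = sum_list a"
    using fundslide_nonzero_dom_ge by blast+
  from dom have "length a = 2" by (simp add: dom_ge_def)
  then obtain x y where a: "a = [x, y]"
    by (auto simp: numeral_2_eq_2 length_Suc_conv)
  with dom have "x = 0" by (simp add: dom_ge_pair)
  with a sum show "a = [0, 1]" by simp
qed

lemma fundslide_1_3_support: "fundslide [1, 3] b \<noteq> 0 \<Longrightarrow> b = [1, 3]"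
proof -
  assume nz: "fundslide [1, 3] b \<noteq> 0"
  then obtain u v where b: "b = [u, v]" "1 \<le> u" "u + v = 4"
    using fundslide_nonzero_dom_ge[OF nz] by (auto simp: dom_ge_pair)
  then have "refines (u # flat [v]) [1, 3]"
    using nz by (simp add: fundslide_def flat_def split: if_splits)
  then have "u \<le> 1" by (rule refines_Cons_le)
  with b show "b = [1, 3]" by simp
qed

(* Stated additively to avoid truncated subtraction. *)
lemma sum_list_take_update:
  fixes xs :: "nat list"
  assumes "n < length xs"
  shows "sum_list (take k (xs[n := x])) + (if n < k then xs ! n else 0) =
         sum_list (take k xs) + (if n < k then x else 0)"
proof -
  have "take k (xs[n := x]) = (take k xs)[n := x]" by (rule take_update_swap)
  moreover have "n < k \<Longrightarrow> xs ! n \<le> sum_list (take k xs)"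
    using elem_le_sum_list[of n "take k xs"] assms by simp
  ultimately show ?thesis using assms by (auto simp: sum_list_update)
qed

(* A move shifts i units from position p + 1 to position p, so only the prefix sum
   of length p + 1 changes, and it grows by i. *)
lemma slide_move_dom_ge:
  fixes b :: "nat list"
  assumes "Suc p < length b" "b ! p = 0" "b ! Suc p = i + j"
  shows "dom_ge (b[p := i, Suc p := j]) b \<and> sum_list (b[p := i, Suc p := j]) = sum_list b"
proof -
  let ?b' = "b[p := i, Suc p := j]"
  have "sum_list (take k b) \<le> sum_list (take k ?b')" for k
    using sum_list_take_update[of p b k i] sum_list_take_update[of "Suc p" "b[p := i]" k j] assms
    by (auto split: if_splits)
  moreover have "sum_list ?b' = sum_list b"
    using sum_list_take_update[of p b "length b" i]
      sum_list_take_update[of "Suc p" "b[p := i]" "length b" j] assms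
    by auto
  ultimately show ?thesis by (simp add: dom_ge_def)
qed

lemma fixed_slides_dom_ge:
  "b \<in> fixed_slides a \<Longrightarrow> dom_ge b a \<and> sum_list b = sum_list a"
proof (induction rule: fixed_slides.induct)
  case refl
  then show ?case by (simp add: dom_ge_def)
next
  case (move b p i j)
  then show ?case using slide_move_dom_ge[of p b i j] by (fastforce simp: dom_ge_def)
qed

lemma fixed_slides_0_1_singleton: "b \<in> fixed_slides [0, 1] \<Longrightarrow> b = [0, 1]"
proof (induction rule: fixed_slides.induct)
  case refl
  then show ?case ..
next
  case (move b p i j)
  from move.IH move.hyps(2) have "p = 0" by simp
  moreover from move.IH move.hyps(4) \<open>p = 0\<close> have "i + j = 1" by simp
  moreover from move.hyps(5) \<open>p = 0\<close> have "j > 0" by simp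
  ultimately show ?case using move.IH by auto
qed

lemma fixed_slides_0_2_contains_1_1: "[1, 1] \<in> fixed_slides [0, 2]"
  using fixed_slides.move[OF fixed_slides.refl, of 0 "[0, 2]" 1 1] by simp

lemma atom_filling_row_mono:
  "atom_filling a S \<Longrightarrow> (r, c) \<in> diag a \<Longrightarrow> (r, Suc c) \<in> diag a \<Longrightarrow> S (r, Suc c) \<le> S (r, c)"
  unfolding atom_filling_def by (elim conjE) blast

lemma atom_filling_first_column:
  "atom_filling a S \<Longrightarrow> 1 \<le> i \<Longrightarrow> i \<le> length a \<Longrightarrow> a ! (i - 1) \<noteq> 0 \<Longrightarrow> S (i, 1) = i"
  unfolding atom_filling_def by (elim conjE) blast

lemma atom_filling_outside:
  "atom_filling a S \<Longrightarrow> x \<notin> diag a \<Longrightarrow> S x = 0"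
  unfolding atom_filling_def by (elim conjE) blast

lemma atom_filling_le_row:
  assumes S: "atom_filling a S"
  shows "(r, c) \<in> diag a \<Longrightarrow> S (r, c) \<le> r"
proof (induction c)
  case 0
  then show ?case by (simp add: diag_def)
next
  case (Suc c)
  show ?case
  proof (cases c)
    case 0
    with Suc.prems show ?thesis
      using atom_filling_first_column[OF S, of r] by (simp add: diag_def)
  next
    case (Suc k)
    with Suc.prems have "(r, c) \<in> diag a" by (simp add: diag_def)
    with Suc.prems Suc.IH show ?thesis
      using atom_filling_row_mono[OF S, of r c] by simp
  qed
qed

lemma finite_diag: "finite (diag a)"
proof (rule finite_subset)
  show "diag a \<subseteq> {..length a} \<times> {..sum_list a}"
  proof
    fix x assume "x \<in> diag a"
    then obtain r c where x: "x = (r, c)" "1 \<le> r" "r \<le> length a" "c \<le> a ! (r - 1)"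
      by (auto simp: diag_def)
    then have "a ! (r - 1) \<le> sum_list a"
      using elem_le_sum_list[of "r - 1" a] by simp
    with x show "x \<in> {..length a} \<times> {..sum_list a}" by simp
  qed
qed simp

lemma finite_atom_fillings: "finite {S. atom_filling a S \<and> Q S}"
proof (rule finite_subset)
  show "{S. atom_filling a S \<and> Q S} \<subseteq>
     {S. \<forall>x. (x \<in> diag a \<longrightarrow> S x \<in> {..length a}) \<and> (x \<notin> diag a \<longrightarrow> S x = 0)}"
    using atom_filling_le_row atom_filling_outside by (fastforce simp: diag_def)
  show "finite {S. \<forall>x. (x \<in> diag a \<longrightarrow> S x \<in> {..length a}) \<and> (x \<notin> diag a \<longrightarrow> S x = 0)}"
    by (intro finite_set_of_finite_funs finite_diag) simp
qed

lemma atom_nonzero_iff: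
  "atom a b \<noteq> 0 \<longleftrightarrow> length b = length a \<and>
     (\<exists>S. atom_filling a S \<and>
        (\<forall>i. 1 \<le> i \<and> i \<le> length a \<longrightarrow> card {x \<in> diag a. S x = i} = b ! (i - 1)))"
  unfolding atom_def using finite_atom_fillings by auto

lemma atom_self: "atom a a \<noteq> 0"
proof -
  let ?S = "\<lambda>x. if x \<in> diag a then fst x else 0"
  have "atom_filling a ?S"
    unfolding atom_filling_def inv_triple_def by (auto simp: diag_def)
  moreover have "{x \<in> diag a. ?S x = i} = {i} \<times> {1..a ! (i - 1)}" if "1 \<le> i" "i \<le> length a" for i
    using that by (auto simp: diag_def)
  ultimately show ?thesis unfolding atom_nonzero_iff by auto
qed

lemma atom_0_1_1_0_eq_0: "atom [0, 1] [1, 0] = 0"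
proof -
  have "diag [0, 1] = {(2, 1)}"
    by (auto simp: diag_def nth_Cons' split: if_splits)
  then have no_ones: "card {x \<in> diag [0, 1]. S x = 1} = 0" if "atom_filling [0, 1] S" for S
    using atom_filling_first_column[OF that, of 2] by simp
  then have "\<nexists>S. atom_filling [0, 1] S \<and>
      (\<forall>i. 1 \<le> i \<and> i \<le> length [0::nat, 1] \<longrightarrow> card {x \<in> diag [0, 1]. S x = i} = [1, 0] ! (i - 1))"
  proof clarify
    fix S assume S: "atom_filling [0, 1] S"
      and "\<forall>i. 1 \<le> i \<and> i \<le> length [0::nat, 1] \<longrightarrow> card {x \<in> diag [0, 1]. S x = i} = [1, 0] ! (i - 1)"
    then have "card {x \<in> diag [0, 1]. S x = 1} = 1" by (drule_tac spec[of _ 1]) simp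
    with no_ones[OF S] show False by simp
  qed
  then show ?thesis using atom_nonzero_iff by blast
qed

lemma atom_1_3_2_2_nonzero: "atom [1, 3] [2, 2] \<noteq> 0"
proof -
  have diag: "diag [1, 3] = {(1, 1), (2, 1), (2, 2), (2, 3)}"
    by (auto simp: diag_def nth_Cons' split: if_splits)
  let ?S = "\<lambda>x. if x \<in> diag [1, 3] then if x = (1, 1) \<or> x = (2, 3) then 1 else 2 else 0 :: nat"
  have filling: "atom_filling [1, 3] ?S"
    unfolding atom_filling_def inv_triple_def diag by auto
  have "{x \<in> diag [1, 3]. ?S x = 1} = {(1, 1), (2, 3)}"
    and "{x \<in> diag [1, 3]. ?S x = 2} = {(2, 1), (2, 2)}"
    unfolding diag by auto
  then have card: "card {x \<in> diag [1, 3]. ?S x = i} = [2, 2] ! (i - 1)" if "i = 1 \<or> i = 2" for i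
    using that by (elim disjE) simp_all
  have "\<forall>i. 1 \<le> i \<and> i \<le> length [1::nat, 3] \<longrightarrow> card {x \<in> diag [1, 3]. ?S x = i} = [2, 2] ! (i - 1)"
  proof (intro allI impI)
    fix i :: nat assume "1 \<le> i \<and> i \<le> length [1::nat, 3]"
    then have "i = 1 \<or> i = 2" by auto
    then show "card {x \<in> diag [1, 3]. ?S x = i} = [2, 2] ! (i - 1)" by (rule card)
  qed
  with filling show ?thesis
    using atom_nonzero_iff[of "[1, 3]" "[2, 2]"] by auto
qed

lemma not_pos_comb_slides_0_1:
  assumes mono_le: "\<And>a b. monoslide a b \<le> Y a b" and le_fund: "\<And>a b. Y a b \<le> fundslide a b"
    and "f [0, 1] \<noteq> 0" "f [1, 0] = 0"
  shows "\<not> pos_comb 2 Y f"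
proof (rule not_pos_comb_by_support)
  show Y_nonneg: "Y a b \<ge> 0" for a b
    using mono_le[of a b] by (simp add: monoslide_def split: if_splits)
  fix a assume "Y a [0, 1] \<noteq> 0"
  then have "fundslide a [0, 1] \<noteq> 0"
    using Y_nonneg[of a "[0, 1]"] le_fund[of a "[0, 1]"] by linarith
  then have "a = [0, 1]" by (rule fundslide_containing_0_1)
  moreover have "monoslide [0, 1] [1, 0] = 1"
    by (simp add: monoslide_def dom_ge_pair flat_def)
  ultimately show "\<exists>b'. Y a b' \<noteq> 0 \<and> f b' = 0"
    using mono_le[of a "[1, 0]"] assms(4) by (intro exI[of _ "[1, 0]"]) auto
qed fact

lemma not_pos_comb_atom_slide_1_3:
  assumes mono_le: "\<And>a b. monoslide a b \<le> Y a b" and le_fund: "\<And>a b. Y a b \<le> fundslide a b"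
  shows "\<not> pos_comb 2 atom (Y [1, 3])"
proof (rule not_pos_comb_by_support)
  have "monoslide [1, 3] [1, 3] = 1"
    by (simp add: monoslide_def dom_ge_pair)
  then show "Y [1, 3] [1, 3] \<noteq> 0"
    using mono_le[of "[1, 3]" "[1, 3]"] by simp
  have Y_support: "Y [1, 3] b = 0" if "b \<noteq> [1, 3]" for b
  proof -
    have "fundslide [1, 3] b = 0" using that fundslide_1_3_support by blast
    then show ?thesis
      using mono_le[of "[1, 3]" b] le_fund[of "[1, 3]" b] by (simp add: monoslide_def split: if_splits)
  qed
  fix a
  show "\<exists>b'. atom a b' \<noteq> 0 \<and> Y [1, 3] b' = 0"
  proof (cases "a = [1, 3]")
    case True
    then show ?thesis using atom_1_3_2_2_nonzero Y_support by auto
  next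
    case False
    then show ?thesis using atom_self Y_support by blast
  qed
qed (simp add: atom_def)

lemma not_pos_comb_particle_monoslide_0_2: "\<not> pos_comb 2 particle (monoslide [0, 2])"
proof (rule not_pos_comb_by_support)
  fix a :: "nat list"
  assume "length a = 2" "particle a [0, 2] \<noteq> 0"
  then have "a = [0, 2]"
    using fixed_slides_dom_ge[of "[0, 2]" a]
    by (auto simp: particle_def dom_ge_pair numeral_2_eq_2 length_Suc_conv split: if_splits)
  then show "\<exists>b'. particle a b' \<noteq> 0 \<and> monoslide [0, 2] b' = 0"
    using fixed_slides_0_2_contains_1_1
    by (intro exI[of _ "[1, 1]"]) (simp add: particle_def monoslide_def flat_def)
qed (auto simp: particle_def monoslide_def dom_ge_pair)

theorem proposition4p9:
  shows "mutually_nonpositive atom monoslide \<and> mutually_nonpositive atom fundslide \<and>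
         mutually_nonpositive particle monoslide"
proof -
  have two: "length [x, y :: nat] = 2" for x y by simp
  have particle_0_1: "particle [0, 1] [0, 1] \<noteq> 0" "particle [0, 1] [1, 0] = 0"
    using fixed_slides.refl[of "[0, 1]"] fixed_slides_0_1_singleton by (auto simp: particle_def)
  have "\<not> pos_comb 2 monoslide (atom [0, 1])" "\<not> pos_comb 2 fundslide (atom [0, 1])"
    using not_pos_comb_slides_0_1[OF order_refl monoslide_le_fundslide]
      not_pos_comb_slides_0_1[OF monoslide_le_fundslide order_refl] atom_self atom_0_1_1_0_eq_0
    by simp_all
  moreover have "\<not> pos_comb 2 monoslide (particle [0, 1])"
    using not_pos_comb_slides_0_1[OF order_refl monoslide_le_fundslide] particle_0_1 by simp
  moreover have "\<not> pos_comb 2 atom (monoslide [1, 3])" "\<not> pos_comb 2 atom (fundslide [1, 3])"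
    using not_pos_comb_atom_slide_1_3[OF order_refl monoslide_le_fundslide]
      not_pos_comb_atom_slide_1_3[OF monoslide_le_fundslide order_refl]
    by simp_all
  ultimately show ?thesis
    unfolding mutually_nonpositive_def
    using not_pos_comb_particle_monoslide_0_2 two by metis
qed

end
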